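(* Consider the continuous-time plant $\dot x=f(x,u)$, $x\in\mathbb{R}^n$, $u\in\mathbb{R}^m$, under zero-order hold and possibly nonuniform sampling, fed back with a control law $U:\mathbb{R}^n\times\mathbb{R}^q\times\mathbb{R}_{>0}\to\mathbb{R}^m$, yielding the exact closed-loop model $\bar F^e(x,e,T)=F^e(x,U(x,e,T),T)$. Assume: (A1) $f$ is locally Lipschitz in $x$ uniformly in $u$: for all compact $\mathcal{X}\subset\mathbb{R}^n$, $\mathcal{U}\subset\mathbb{R}^m$ there is $L>0$ with $|f(x,u)-f(y,u)|\le L|x-y|$ for $x,y\in\mathcal{X}$, $u\in\mathcal{U}$; (A2) $f$ is locally bounded: for every $M,C_u\ge0$ there exists $C_f(M,C_u)>0$, nondecreasing in each variable, with $|f(x,u)|\le C_f$ for $|x|\le M$, $|u|\le C_u$; (A3) $U$ is small-time locally uniformly bounded: for every $M,E\ge0$ there exist $T^u(M,E)>0$ (nonincreasing in each variable) and $C_u(M,E)>0$ (nondecreasing in each variable) with $|U(x,e,T)|\le C_u$ for all $|x|\le M$, $|e|\le E$, $T\in(0,T^u)$. Suppose further that: (i) there exists $\phi\in\mathcal{K}_\infty$ such that for every $E\ge0$ there exists $T^i(E)>0$ such that $|f(0,U(0,e,T))|\le\phi(|e|)$ for all $|e|\le E$, $T\in(0,T^i)$; (ii) for every $M,E\ge0$ there exist $K(M,E)>0$ and $T^{ii}(M,E)>0$, with $K$ nondecreasing and $T^{ii}$ nonincreasing in each variable, such that $|f(x^a,U(x^a,e,T))-f(x^b,U(x^b,e,T))|\le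 K|x^a-x^b|$ for all $|x^a|,|x^b|\le M$, $|e|\le E$, $T\in(0,T^{ii})$. Let $F^{RK}$ be any explicit and consistent Runge-Kutta model for $\dot x=f(x,u)$ and $\bar F^{RK}(x,e,T):=F^{RK}(x,U(x,e,T),T)$. Then the pair $(\bar F^{RK},\bar F^e)$ is REPC.
   Context: $F^e(\xi,u,T)$ denotes the exact discrete-time model: the value at time $T$ of the solution of $\dot x=f(x,u)$ with constant input $u$ starting from $x(0)=\xi$. An $s$-stage explicit Runge-Kutta model is $F^{RK}(x,u,T):=x+T\sum_{i=1}^s b_i f(y_i,u)$, where $y_1=x$ and $y_i=x+T\sum_{j=1}^{i-1}a_{ij}f(y_j,u)$ for $i=2,\dots,s$, with real coefficients $a_{ij},b_i$; it is consistent if $\sum_{i=1}^s b_i=1$. $\mathcal{K}_\infty$: continuous, strictly increasing, unbounded functions $\mathbb{R}_{\ge0}\to\mathbb{R}_{\ge0}$ vanishing at $0$. REPC: a model $\bar F^a$ is Robustly Equilibrium-Preserving Consistent with $\bar F^b$ (and the pair $(\bar F^a,\bar F^b)$ is called REPC) if there exists $\phi\in\mathcal{K}_\infty$ such that for each $M,E\ge0$ there exist constants $K>0$, $T^*>0$ and $\rho\in\mathcal{K}_\infty$ with $|\bar F^a(x^a,e,T)-\bar F^b(x^b,e,T)|\le(1+KT)|x^a-x^b|+T\rho(T)(\max\{|x^a|,|x^b|\}+\phi(|e|))$ for all $|x^a|,|x^b|\le M$, $|e|\le E$, $T\in(0,T^* )$. *)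

theory Defs
  imports "HOL-Analysis.Analysis"
begin

text \<open>Class K-infinity functions on the nonnegative reals (real functions, only their
  behaviour on [0,oo) matters).\<close>
definition Kinf :: "(real \<Rightarrow> real) \<Rightarrow> bool" where
  "Kinf \<phi> \<longleftrightarrow> \<phi> 0 = 0 \<and> continuous_on {0..} \<phi> \<and> strict_mono_on {0..} \<phi>
      \<and> filterlim \<phi> at_top at_top"

definition exact_model :: "('a::euclidean_space \<Rightarrow> 'b \<Rightarrow> 'a) \<Rightarrow> 'a \<Rightarrow> 'b \<Rightarrow> real \<Rightarrow> 'a" where
  "exact_model f \<xi> u T =
     (SOME y. y 0 = \<xi> \<and>
        (\<forall>t\<in>{0..T}. (y has_vector_derivative f (y t) u) (at t within {0..T}))) T"

text \<open>Stages of an explicit Runge-Kutta scheme (0-based: stage i uses a i j for j < i;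
  stage 0 is x itself).\<close>
fun rk_stages :: "('a::real_vector \<Rightarrow> 'b \<Rightarrow> 'a) \<Rightarrow> (nat \<Rightarrow> nat \<Rightarrow> real) \<Rightarrow> 'a \<Rightarrow> 'b \<Rightarrow> real
                   \<Rightarrow> nat \<Rightarrow> 'a list" where
  "rk_stages f a x u T 0 = []"
| "rk_stages f a x u T (Suc i) =
     (let ys = rk_stages f a x u T i
      in ys @ [x + T *\<^sub>R (\<Sum>j<i. a i j *\<^sub>R f (ys ! j) u)])"

definition rk_stage :: "('a::real_vector \<Rightarrow> 'b \<Rightarrow> 'a) \<Rightarrow> (nat \<Rightarrow> nat \<Rightarrow> real) \<Rightarrow> 'a \<Rightarrow> 'b \<Rightarrow> real
                   \<Rightarrow> nat \<Rightarrow> 'a" where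
  "rk_stage f a x u T i = rk_stages f a x u T (Suc i) ! i"

definition rk_model :: "('a::real_vector \<Rightarrow> 'b \<Rightarrow> 'a) \<Rightarrow> nat \<Rightarrow> (nat \<Rightarrow> nat \<Rightarrow> real) \<Rightarrow> (nat \<Rightarrow> real)
                        \<Rightarrow> 'a \<Rightarrow> 'b \<Rightarrow> real \<Rightarrow> 'a" where
  "rk_model f s a b x u T = x + T *\<^sub>R (\<Sum>i<s. b i *\<^sub>R f (rk_stage f a x u T i) u)"

definition rk_consistent :: "nat \<Rightarrow> (nat \<Rightarrow> real) \<Rightarrow> bool" where
  "rk_consistent s b \<longleftrightarrow> (\<Sum>i<s. b i) = 1"

definition REPC :: "('a::real_normed_vector \<Rightarrow> 'c::real_normed_vector \<Rightarrow> real \<Rightarrow> 'a)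
                    \<Rightarrow> ('a \<Rightarrow> 'c \<Rightarrow> real \<Rightarrow> 'a) \<Rightarrow> bool" where
  "REPC Fa Fb \<longleftrightarrow> (\<exists>\<phi>. Kinf \<phi> \<and>
     (\<forall>M\<ge>0. \<forall>E\<ge>0. \<exists>K>0. \<exists>Ts>0. \<exists>\<rho>. Kinf \<rho> \<and>
        (\<forall>xa xb e T. norm xa \<le> M \<longrightarrow> norm xb \<le> M \<longrightarrow> norm e \<le> E \<longrightarrow> 0 < T \<longrightarrow> T < Ts \<longrightarrow>
           norm (Fa xa e T - Fb xb e T)
             \<le> (1 + K * T) * norm (xa - xb)
                + T * \<rho> T * (max (norm xa) (norm xb) + \<phi> (norm e)))))"

end

theory Submission
  imports Defs
begin

(* Both models agree with the Euler step x + T f(x,u) up to an error of order T^2 |f(x,u)|.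
   For the exact model: while T times the bound of f on the unit ball around x stays below 1,
   the solution cannot leave that ball, it moves by at most 2T|f(x,u)|, and so its velocity stays
   within 2LT|f(x,u)| of f(x,u).  Since the exact model is defined by choice, a solution has to be
   produced first; Picard iteration applies to f composed with the nearest-point projection onto
   the ball, and by the previous argument that solution solves the original equation.
   For a consistent Runge-Kutta model every stage lies within 2 alpha T |f(x,u)| of x, where alpha
   bounds the row sums of |a i j|.
   Along the closed loop, (ii) makes the two Euler steps differ by at most K T |xa - xb|, and (i)
   together with (ii) gives |f(x, U(x,e,T))| <= (K+1)(|x| + phi |e|), so rho can be taken linear. *)

definition ode_solution :: "('a::real_normed_vector \<Rightarrow> 'a) \<Rightarrow> 'a \<Rightarrow> real \<Rightarrow> (real \<Rightarrow> 'a) \<Rightarrow> bool"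
  where "ode_solution h \<xi> T y \<longleftrightarrow>
    y 0 = \<xi> \<and> (\<forall>t\<in>{0..T}. (y has_vector_derivative h (y t)) (at t within {0..T}))"

lemma ode_solution_continuous_on:
  "ode_solution h \<xi> T y \<Longrightarrow> continuous_on {0..T} y"
  unfolding ode_solution_def continuous_on_eq_continuous_within
  using has_vector_derivative_continuous by blast

(* Clamping t to [0,T] extends the iterate constantly, making it a bounded continuous function
   on the whole real line. *)
definition picard :: "('a::banach \<Rightarrow> 'a) \<Rightarrow> 'a \<Rightarrow> real \<Rightarrow> (real \<Rightarrow>\<^sub>C 'a) \<Rightarrow> real \<Rightarrow> 'a"
  where "picard h \<xi> T y t = \<xi> + integral {0..max 0 (min T t)} (\<lambda>s. h (apply_bcontfun y s))"

lemma continuous_on_comp_bcontfun: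
  "continuous_on UNIV h \<Longrightarrow> continuous_on S (\<lambda>s. h (apply_bcontfun y s))"
  by (rule continuous_on_compose2) auto

lemma picard_bcontfun:
  fixes h :: "'a::banach \<Rightarrow> 'a"
  assumes lip: "L-lipschitz_on UNIV h" and T: "0 \<le> T"
  shows "picard h \<xi> T y \<in> bcontfun"
proof (rule bcontfun_normI)
  let ?c = "\<lambda>t. max 0 (min T t)"
  have L: "0 \<le> L"
    using lip by (rule lipschitz_on_nonneg)
  have cont: "continuous_on S (\<lambda>s. h (apply_bcontfun y s))" for S
    using lipschitz_on_continuous_on[OF lip] by (rule continuous_on_comp_bcontfun)
  have "continuous_on UNIV (\<lambda>t. integral {0..?c t} (\<lambda>s. h (apply_bcontfun y s)))"
    by (rule continuous_on_compose2[OF indefinite_integral_continuous_1])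
      (use T in \<open>auto intro!: integrable_continuous_real cont continuous_intros\<close>)
  then show "continuous_on UNIV (picard h \<xi> T y)"
    unfolding picard_def by (intro continuous_intros)
  fix t
  have "norm (h (apply_bcontfun y s)) \<le> norm (h 0) + L * norm y" for s
  proof -
    have "norm (h (apply_bcontfun y s) - h 0) \<le> L * norm (apply_bcontfun y s)"
      using lipschitz_onD[OF lip, of "apply_bcontfun y s" 0] by (simp add: dist_norm)
    also have "\<dots> \<le> L * norm y"
      by (rule mult_left_mono[OF norm_bounded L])
    finally show ?thesis
      by (smt (verit) norm_triangle_sub)
  qed
  then have "norm (integral {0..?c t} (\<lambda>s. h (apply_bcontfun y s))) \<le> (norm (h 0) + L * norm y) * (?c t - 0)"
    by (intro integral_bound) (use T cont in auto)
  also have "\<dots> \<le> (norm (h 0) + L * norm y) * T"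
    using T L by (intro mult_left_mono) auto
  finally show "norm (picard h \<xi> T y t) \<le> norm \<xi> + (norm (h 0) + L * norm y) * T"
    unfolding picard_def by (smt (verit) norm_triangle_ineq)
qed

lemma picard_contraction:
  fixes h :: "'a::banach \<Rightarrow> 'a"
  assumes lip: "L-lipschitz_on UNIV h" and T: "0 \<le> T"
  shows "dist (Bcontfun (picard h \<xi> T y)) (Bcontfun (picard h \<xi> T z)) \<le> T * L * dist y z"
proof -
  have L: "0 \<le> L"
    using lip by (rule lipschitz_on_nonneg)
  have cont: "continuous_on S (\<lambda>s. h (apply_bcontfun y s))" for S y
    using lipschitz_on_continuous_on[OF lip] by (rule continuous_on_comp_bcontfun)
  have "norm (picard h \<xi> T y t - picard h \<xi> T z t) \<le> T * L * dist y z" for t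
  proof -
    let ?c = "max 0 (min T t)"
    have "picard h \<xi> T y t - picard h \<xi> T z t
        = integral {0..?c} (\<lambda>s. h (apply_bcontfun y s) - h (apply_bcontfun z s))"
      by (simp add: picard_def integral_diff integrable_continuous_real cont)
    also have "norm \<dots> \<le> (L * dist y z) * (?c - 0)"
    proof (rule integral_bound)
      fix s
      have "norm (h (apply_bcontfun y s) - h (apply_bcontfun z s))
          \<le> L * dist (apply_bcontfun y s) (apply_bcontfun z s)"
        using lipschitz_onD[OF lip] by (simp add: dist_norm)
      also have "\<dots> \<le> L * dist y z"
        using dist_bounded L by (rule mult_left_mono)
      finally show "norm (h (apply_bcontfun y s) - h (apply_bcontfun z s)) \<le> L * dist y z" .
    qed (use T in \<open>auto intro!: continuous_intros cont\<close>)
    also have "\<dots> \<le> (L * dist y z) * T"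
      using T L by (intro mult_left_mono) auto
    finally show ?thesis
      by (simp add: ac_simps)
  qed
  then show ?thesis
    unfolding dist_norm using picard_bcontfun[OF lip T]
    by (intro norm_bound) (simp add: Bcontfun_inverse)
qed

lemma ode_solution_picard_fixpoint:
  fixes h :: "'a::banach \<Rightarrow> 'a"
  assumes cont: "continuous_on UNIV h" and T: "0 \<le> T" and fixpoint: "apply_bcontfun y = picard h \<xi> T y"
  shows "ode_solution h \<xi> T (apply_bcontfun y)"
proof -
  have y_eq: "apply_bcontfun y t = \<xi> + integral {0..t} (\<lambda>s. h (apply_bcontfun y s))"
    if "t \<in> {0..T}" for t
  proof -
    have "apply_bcontfun y t = picard h \<xi> T y t"
      by (simp only: fixpoint)
    also have "\<dots> = \<xi> + integral {0..t} (\<lambda>s. h (apply_bcontfun y s))"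
      using that by (simp add: picard_def)
    finally show ?thesis .
  qed
  show ?thesis
    unfolding ode_solution_def
  proof (intro conjI ballI)
    show "apply_bcontfun y 0 = \<xi>"
      using y_eq[of 0] T by simp
    fix t assume t: "t \<in> {0..T}"
    have "((\<lambda>t. \<xi> + integral {0..t} (\<lambda>s. h (apply_bcontfun y s)))
        has_vector_derivative 0 + h (apply_bcontfun y t)) (at t within {0..T})"
      by (intro derivative_intros integral_has_vector_derivative t continuous_on_comp_bcontfun cont)
    then show "(apply_bcontfun y has_vector_derivative h (apply_bcontfun y t)) (at t within {0..T})"
      by (intro has_vector_derivative_transform[OF t y_eq]) auto
  qed
qed

lemma ode_solution_exists_lipschitz:
  fixes h :: "'a::banach \<Rightarrow> 'a"
  assumes lip: "L-lipschitz_on UNIV h" and T: "0 \<le> T" and TL: "T * L < 1"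
  shows "\<exists>y. ode_solution h \<xi> T y"
proof -
  obtain y where "Bcontfun (picard h \<xi> T y) = y"
    using banach_fix_type[of "T * L" "\<lambda>y. Bcontfun (picard h \<xi> T y)"] picard_contraction[OF lip T]
      T lipschitz_on_nonneg[OF lip] TL by auto
  then have "apply_bcontfun y = picard h \<xi> T y"
    using picard_bcontfun[OF lip T] by (metis Bcontfun_inverse)
  then show ?thesis
    using lipschitz_on_continuous_on[OF lip] T by (blast intro: ode_solution_picard_fixpoint)
qed

lemma norm_diff_le_of_vector_derivative_bound:
  fixes z :: "real \<Rightarrow> 'a::real_normed_vector"
  assumes t: "0 \<le> t" "t \<le> T"
    and der: "\<And>s. s \<in> {0..T} \<Longrightarrow> (z has_vector_derivative z' s) (at s within {0..T})"
    and bound: "\<And>s. 0 < s \<Longrightarrow> s < t \<Longrightarrow> norm (z' s) \<le> C"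
  shows "norm (z t - z 0) \<le> t * C"
proof (cases "t = 0")
  case False
  then have "0 < t"
    using t by simp
  moreover have "continuous_on {0..t} z"
    using der t unfolding continuous_on_eq_continuous_within
    by (meson atLeastAtMost_iff continuous_within_subset has_vector_derivative_continuous
        order_trans subsetI)
  moreover have "(z has_vector_derivative z' s) (at s)" if "0 < s" "s < t" for s
    using der[of s] that t by (simp add: at_within_Icc_at)
  ultimately have "norm (z t - z 0) \<le> t * C - 0 * C"
    by (intro differentiable_bound_general[where \<phi>' = "\<lambda>_. C"] bound)
      (auto intro!: continuous_intros derivative_eq_intros bound)
  then show ?thesis
    by simp
qed simp

lemma ode_solution_in_cball:
  fixes h :: "'a::real_normed_vector \<Rightarrow> 'a"
  assumes sol: "ode_solution h \<xi> T y"
    and bound: "\<And>x. x \<in> cball \<xi> r \<Longrightarrow> norm (h x) \<le> B" and B: "0 \<le> B" and TB: "T * B < r"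
    and t: "t \<in> {0..T}"
  shows "y t \<in> cball \<xi> r"
proof (rule ccontr)
  assume "y t \<notin> cball \<xi> r"
  define r' where "r' = (r + T * B) / 2"
  have "0 \<le> T * B"
    using t B by simp
  then have r': "T * B < r'" "r' < r" "0 < r'"
    using TB by (simp_all add: r'_def field_simps)
  define S where "S = {0..T} \<inter> (\<lambda>s. norm (y s - \<xi>)) -` {r'..}"
  have "closed S"
    unfolding S_def using ode_solution_continuous_on[OF sol]
    by (intro continuous_closed_preimage) (auto intro!: continuous_intros)
  then have "compact S"
    by (simp add: S_def compact_eq_bounded_closed bounded_Int)
  moreover have "t \<in> S"
    using \<open>y t \<notin> cball \<xi> r\<close> t r'(2) by (simp add: S_def dist_norm norm_minus_commute)
  ultimately obtain t1 where t1: "t1 \<in> S" and first: "\<And>s. s \<in> S \<Longrightarrow> t1 \<le> s"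
    by (metis compact_attains_inf empty_iff)
  have t1_range: "0 \<le> t1" "t1 \<le> T" and far: "r' \<le> norm (y t1 - \<xi>)"
    using t1 by (auto simp: S_def)
  have "norm (y t1 - y 0) \<le> t1 * B"
  proof (rule norm_diff_le_of_vector_derivative_bound[OF t1_range])
    show "(y has_vector_derivative h (y s)) (at s within {0..T})" if "s \<in> {0..T}" for s
      using sol that by (simp add: ode_solution_def)
    fix s assume s: "0 < s" "s < t1"
    then have "s \<notin> S"
      using first by force
    then have "norm (y s - \<xi>) < r'"
      using s t1_range by (auto simp: S_def)
    then show "norm (h (y s)) \<le> B"
      using r' by (intro bound) (simp add: dist_norm norm_minus_commute)
  qed
  moreover have "t1 * B \<le> T * B"
    using t1_range B by (intro mult_right_mono)
  ultimately show False
    using far r' sol by (simp add: ode_solution_def)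
qed

lemma ode_solution_exists:
  fixes h :: "'a::euclidean_space \<Rightarrow> 'a"
  assumes lip: "L-lipschitz_on (cball \<xi> r) h"
    and bound: "\<And>x. x \<in> cball \<xi> r \<Longrightarrow> norm (h x) \<le> B" and B: "0 \<le> B"
    and T: "0 \<le> T" and TB: "T * B < r" and TL: "T * L < 1"
  shows "\<exists>y. ode_solution h \<xi> T y"
proof -
  have r: "0 \<le> r"
    using mult_nonneg_nonneg[OF T B] TB by linarith
  define p where "p = closest_point (cball \<xi> r)"
  have p_in: "p x \<in> cball \<xi> r" for x
    unfolding p_def using r by (intro closest_point_in_set) auto
  have p_id: "p x = x" if "x \<in> cball \<xi> r" for x
    unfolding p_def using that by (rule closest_point_self)
  have "1-lipschitz_on UNIV p"
    unfolding p_def using r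
    by (intro lipschitz_onI) (auto intro!: closest_point_lipschitz simp: convex_cball)
  moreover have "L-lipschitz_on (p ` UNIV) h"
    by (rule lipschitz_on_subset[OF lip]) (use p_in in auto)
  ultimately have "(L * 1)-lipschitz_on UNIV (h \<circ> p)"
    by (rule lipschitz_on_compose)
  then obtain y where y: "ode_solution (h \<circ> p) \<xi> T y"
    using ode_solution_exists_lipschitz T TL by (metis mult_1_right)
  have y_in: "y t \<in> cball \<xi> r" if "t \<in> {0..T}" for t
    using y by (rule ode_solution_in_cball) (use bound p_in p_id B TB that in auto)
  have "ode_solution h \<xi> T y"
    using y y_in p_id by (simp add: ode_solution_def)
  then show ?thesis
    by blast
qed

lemma ode_solution_displacement:
  fixes h :: "'a::real_normed_vector \<Rightarrow> 'a"
  assumes sol: "ode_solution h \<xi> T y" and lip: "L-lipschitz_on (cball \<xi> r) h"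
    and bound: "\<And>x. x \<in> cball \<xi> r \<Longrightarrow> norm (h x) \<le> B" and B: "0 \<le> B"
    and TB: "T * B < r" and TL: "2 * T * L \<le> 1" and t: "t \<in> {0..T}"
  shows "norm (y t - \<xi>) \<le> 2 * T * norm (h \<xi>)"
proof -
  have y0: "y 0 = \<xi>"
    and der: "\<And>s. s \<in> {0..T} \<Longrightarrow> (y has_vector_derivative h (y s)) (at s within {0..T})"
    using sol by (auto simp: ode_solution_def)
  have y_in: "y s \<in> cball \<xi> r" if "s \<in> {0..T}" for s
    using sol bound B TB that by (rule ode_solution_in_cball)
  have "continuous_on {0..T} (\<lambda>s. norm (y s - \<xi>))"
    using ode_solution_continuous_on[OF sol] by (intro continuous_intros)
  moreover have "{0..T} \<noteq> {}"
    using t by auto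
  ultimately obtain t0 where t0: "t0 \<in> {0..T}"
    and max: "\<And>s. s \<in> {0..T} \<Longrightarrow> norm (y s - \<xi>) \<le> norm (y t0 - \<xi>)"
    using continuous_attains_sup[OF compact_Icc] by blast
  define W where "W = norm (y t0 - \<xi>)"
  have "norm (h (y s)) \<le> L * W + norm (h \<xi>)" if "s \<in> {0..T}" for s
  proof -
    have "norm (h (y s) - h \<xi>) \<le> L * norm (y s - \<xi>)"
      using lipschitz_onD[OF lip y_in[OF that] y_in[of 0]] that by (simp add: y0 dist_norm)
    also have "\<dots> \<le> L * W"
      using max[OF that] lipschitz_on_nonneg[OF lip] by (simp add: W_def mult_left_mono)
    finally show ?thesis
      by (smt (verit) norm_triangle_sub)
  qed
  then have "norm (y t0 - y 0) \<le> t0 * (L * W + norm (h \<xi>))"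
    using t0 by (intro norm_diff_le_of_vector_derivative_bound[of t0 T y "\<lambda>s. h (y s)"] der) auto
  also have "\<dots> \<le> T * (L * W + norm (h \<xi>))"
    using t0 lipschitz_on_nonneg[OF lip] by (intro mult_right_mono) (auto simp: W_def)
  finally have "W \<le> T * L * W + T * norm (h \<xi>)"
    by (simp add: y0 W_def distrib_left)
  moreover have "2 * T * L * W \<le> W"
    using TL mult_right_mono[of "2 * T * L" 1 W] by (simp add: W_def)
  ultimately have "W \<le> 2 * T * norm (h \<xi>)"
    by linarith
  then show ?thesis
    using max[OF t] by (simp add: W_def)
qed

lemma ode_solution_remainder:
  fixes h :: "'a::real_normed_vector \<Rightarrow> 'a"
  assumes sol: "ode_solution h \<xi> T y" and lip: "L-lipschitz_on (cball \<xi> r) h"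
    and bound: "\<And>x. x \<in> cball \<xi> r \<Longrightarrow> norm (h x) \<le> B" and B: "0 \<le> B"
    and T: "0 \<le> T" and TB: "T * B < r" and TL: "2 * T * L \<le> 1"
  shows "norm (y T - \<xi> - T *\<^sub>R h \<xi>) \<le> 2 * L * T\<^sup>2 * norm (h \<xi>)"
proof -
  have y0: "y 0 = \<xi>"
    and der: "\<And>s. s \<in> {0..T} \<Longrightarrow> (y has_vector_derivative h (y s)) (at s within {0..T})"
    using sol by (auto simp: ode_solution_def)
  have "0 \<le> r"
    using mult_nonneg_nonneg[OF T B] TB by linarith
  have "norm (h (y s) - h (y 0)) \<le> L * (2 * T * norm (h \<xi>))" if s: "s \<in> {0..T}" for s
  proof -
    have "norm (h (y s) - h \<xi>) \<le> L * norm (y s - \<xi>)"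
      using lipschitz_onD[OF lip ode_solution_in_cball[OF sol bound B TB s], of \<xi>] \<open>0 \<le> r\<close>
      by (simp add: dist_norm)
    also have "\<dots> \<le> L * (2 * T * norm (h \<xi>))"
      using ode_solution_displacement[OF sol lip bound B TB TL s] lipschitz_on_nonneg[OF lip]
      by (rule mult_left_mono)
    finally show ?thesis
      by (simp add: y0)
  qed
  then have "norm (y T - y 0 - (T - 0) *\<^sub>R h (y 0)) \<le> norm (T - 0) * (L * (2 * T * norm (h \<xi>)))"
    by (intro vector_differentiable_bound_linearization[where S = "{0..T}"])
      (use der T in \<open>auto simp: closed_segment_eq_real_ivl\<close>)
  also have "norm (T - 0) * (L * (2 * T * norm (h \<xi>))) = 2 * L * T\<^sup>2 * norm (h \<xi>)"
    using T by (simp add: power2_eq_square)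
  finally show ?thesis
    by (simp add: y0)
qed

lemma exact_model_eq_Eps: "exact_model f \<xi> u T = (SOME y. ode_solution (\<lambda>x. f x u) \<xi> T y) T"
  by (simp add: exact_model_def ode_solution_def)

lemma exact_model_remainder:
  fixes f :: "'a::euclidean_space \<Rightarrow> 'b \<Rightarrow> 'a"
  assumes lip: "L-lipschitz_on (cball x r) (\<lambda>y. f y u)"
    and bound: "\<And>y. y \<in> cball x r \<Longrightarrow> norm (f y u) \<le> B" and B: "0 \<le> B"
    and T: "0 \<le> T" and TB: "T * B < r" and TL: "2 * T * L \<le> 1"
  shows "norm (exact_model f x u T - x - T *\<^sub>R f x u) \<le> 2 * L * T\<^sup>2 * norm (f x u)"
proof -
  have "T * L < 1"
    using TL mult_nonneg_nonneg[OF T lipschitz_on_nonneg[OF lip]] by linarith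
  then have "\<exists>y. ode_solution (\<lambda>y. f y u) x T y"
    using lip bound B T TB by (intro ode_solution_exists)
  then have "ode_solution (\<lambda>y. f y u) x T (SOME y. ode_solution (\<lambda>y. f y u) x T y)"
    by (rule someI_ex)
  from ode_solution_remainder[OF this lip bound B T TB TL] show ?thesis
    by (simp add: exact_model_eq_Eps)
qed

lemma length_rk_stages [simp]: "length (rk_stages f a x u T n) = n"
  by (induction n) (simp_all add: Let_def)

lemma nth_rk_stages: "i < n \<Longrightarrow> rk_stages f a x u T n ! i = rk_stage f a x u T i"
proof (induction n)
  case (Suc n)
  then show ?case
    by (cases "i = n") (auto simp: rk_stage_def Let_def nth_append)
qed simp

lemma rk_stage_eq: "rk_stage f a x u T i = x + T *\<^sub>R (\<Sum>j<i. a i j *\<^sub>R f (rk_stage f a x u T j) u)"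
  by (simp add: rk_stage_def Let_def nth_append nth_rk_stages)

lemma norm_sum_scaleR_le:
  fixes v :: "nat \<Rightarrow> 'a::real_normed_vector"
  assumes "\<And>j. j < n \<Longrightarrow> norm (v j) \<le> C" and "0 \<le> C" and "(\<Sum>j<n. \<bar>c j\<bar>) \<le> \<alpha>"
  shows "norm (\<Sum>j<n. c j *\<^sub>R v j) \<le> \<alpha> * C"
proof -
  have "norm (\<Sum>j<n. c j *\<^sub>R v j) \<le> (\<Sum>j<n. \<bar>c j\<bar> * C)"
    by (rule sum_norm_le) (use assms(1) in \<open>auto intro: mult_left_mono\<close>)
  also have "\<dots> = (\<Sum>j<n. \<bar>c j\<bar>) * C"
    by (simp add: sum_distrib_right)
  also have "\<dots> \<le> \<alpha> * C"
    using assms(2,3) by (rule mult_right_mono[rotated])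
  finally show ?thesis .
qed

lemma rk_stage_bound:
  fixes f :: "'a::real_normed_vector \<Rightarrow> 'b \<Rightarrow> 'a"
  assumes row: "\<And>i. i < s \<Longrightarrow> (\<Sum>j<i. \<bar>a i j\<bar>) \<le> \<alpha>"
    and lip: "L-lipschitz_on (cball x r) (\<lambda>y. f y u)"
    and bound: "\<And>y. y \<in> cball x r \<Longrightarrow> norm (f y u) \<le> B" and B: "0 \<le> B"
    and T: "0 \<le> T" and TB: "T * \<alpha> * B \<le> r" and TL: "2 * T * \<alpha> * L \<le> 1"
    and i: "i < s"
  shows "rk_stage f a x u T i \<in> cball x r \<and> norm (rk_stage f a x u T i - x) \<le> 2 * \<alpha> * T * norm (f x u)"
  using i
proof (induction i rule: less_induct)
  case (less i)
  let ?y = "\<lambda>j. rk_stage f a x u T j"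
  let ?A = "norm (f x u)"
  have "0 \<le> (\<Sum>j<i. \<bar>a i j\<bar>)"
    by (simp add: sum_nonneg)
  with row[OF less.prems] have \<alpha>: "0 \<le> \<alpha>"
    by linarith
  have r: "0 \<le> r"
    using TB mult_nonneg_nonneg[OF mult_nonneg_nonneg[OF T \<alpha>] B] by linarith
  have IH: "?y j \<in> cball x r" "norm (?y j - x) \<le> 2 * \<alpha> * T * ?A" if "j < i" for j
    using less.IH[OF that] that less.prems by auto
  have f_le_B: "norm (f (?y j) u) \<le> B" if "j < i" for j
    using IH(1)[OF that] by (rule bound)
  have f_le_2A: "norm (f (?y j) u) \<le> 2 * ?A" if "j < i" for j
  proof -
    have "norm (f (?y j) u - f x u) \<le> L * norm (?y j - x)"
      using lipschitz_onD[OF lip IH(1)[OF that], of x] r by (simp add: dist_norm)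
    also have "\<dots> \<le> L * (2 * \<alpha> * T * ?A)"
      using IH(2)[OF that] lipschitz_on_nonneg[OF lip] by (rule mult_left_mono)
    also have "\<dots> = (2 * T * \<alpha> * L) * ?A"
      by (simp add: ac_simps)
    also have "\<dots> \<le> ?A"
      using mult_right_mono[OF TL norm_ge_zero] by simp
    finally show ?thesis
      by (smt (verit) norm_triangle_sub)
  qed
  have stage: "norm (?y i - x) = T * norm (\<Sum>j<i. a i j *\<^sub>R f (?y j) u)"
    using T by (subst rk_stage_eq) simp
  have "norm (?y i - x) \<le> T * (\<alpha> * B)"
    unfolding stage using T
    by (intro mult_left_mono norm_sum_scaleR_le f_le_B row less.prems B) auto
  then have "?y i \<in> cball x r"
    using TB by (simp add: dist_norm norm_minus_commute ac_simps)
  moreover have "norm (?y i - x) \<le> T * (\<alpha> * (2 * ?A))"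
    unfolding stage using T
    by (intro mult_left_mono norm_sum_scaleR_le f_le_2A row less.prems) auto
  ultimately show ?case
    by (simp add: ac_simps)
qed

lemma rk_model_remainder:
  fixes f :: "'a::real_normed_vector \<Rightarrow> 'b \<Rightarrow> 'a"
  assumes cons: "rk_consistent s b"
    and row: "\<And>i. i < s \<Longrightarrow> (\<Sum>j<i. \<bar>a i j\<bar>) \<le> \<alpha>"
    and lip: "L-lipschitz_on (cball x r) (\<lambda>y. f y u)"
    and bound: "\<And>y. y \<in> cball x r \<Longrightarrow> norm (f y u) \<le> B" and B: "0 \<le> B"
    and T: "0 \<le> T" and TB: "T * \<alpha> * B \<le> r" and TL: "2 * T * \<alpha> * L \<le> 1"
  shows "norm (rk_model f s a b x u T - x - T *\<^sub>R f x u)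
    \<le> 2 * \<alpha> * (\<Sum>i<s. \<bar>b i\<bar>) * L * T\<^sup>2 * norm (f x u)"
proof -
  let ?y = "\<lambda>i. rk_stage f a x u T i"
  have stage: "?y i \<in> cball x r \<and> norm (?y i - x) \<le> 2 * \<alpha> * T * norm (f x u)" if "i < s" for i
    using row lip bound B T TB TL that by (rule rk_stage_bound)
  \<comment> \<open>by consistency the remainder is a combination of the increments f (y i) u - f x u\<close>
  have "rk_model f s a b x u T - x - T *\<^sub>R f x u = T *\<^sub>R (\<Sum>i<s. b i *\<^sub>R (f (?y i) u - f x u))"
    using cons
    by (simp add: rk_model_def rk_consistent_def scaleR_diff_right sum_subtractf
        flip: scaleR_sum_left)
  also have "norm \<dots> \<le> T * ((\<Sum>i<s. \<bar>b i\<bar>) * (L * (2 * \<alpha> * T * norm (f x u))))"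
  proof -
    have "norm (f (?y i) u - f x u) \<le> L * (2 * \<alpha> * T * norm (f x u))" if "i < s" for i
    proof -
      have "0 \<le> r"
        using stage[OF that] by (auto intro: order_trans[OF zero_le_dist])
      then have "norm (f (?y i) u - f x u) \<le> L * norm (?y i - x)"
        using lipschitz_onD[OF lip, of "?y i" x] stage[OF that] by (simp add: dist_norm)
      also have "\<dots> \<le> L * (2 * \<alpha> * T * norm (f x u))"
        using stage[OF that] lipschitz_on_nonneg[OF lip] by (intro mult_left_mono) auto
      finally show ?thesis .
    qed
    moreover have "0 \<le> \<alpha>"
      using cons row[of 0] by (cases s) (auto simp: rk_consistent_def)
    ultimately show ?thesis
      using T lipschitz_on_nonneg[OF lip]
      by (auto intro!: mult_left_mono norm_sum_scaleR_le mult_nonneg_nonneg)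
  qed
  also have "\<dots> = 2 * \<alpha> * (\<Sum>i<s. \<bar>b i\<bar>) * L * T\<^sup>2 * norm (f x u)"
    by (simp add: power2_eq_square ac_simps)
  finally show ?thesis .
qed

lemma rk_exact_one_step_estimate:
  fixes f :: "'a::euclidean_space \<Rightarrow> 'b \<Rightarrow> 'a"
  assumes cons: "rk_consistent s b"
    and row: "\<And>i. i < s \<Longrightarrow> (\<Sum>j<i. \<bar>a i j\<bar>) \<le> \<alpha>" and \<alpha>: "1 \<le> \<alpha>"
    and lip_a: "L-lipschitz_on (cball xa 1) (\<lambda>x. f x ua)"
    and bound_a: "\<And>x. x \<in> cball xa 1 \<Longrightarrow> norm (f x ua) \<le> B"
    and lip_b: "L-lipschitz_on (cball xb 1) (\<lambda>x. f x ub)"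
    and bound_b: "\<And>x. x \<in> cball xb 1 \<Longrightarrow> norm (f x ub) \<le> B"
    and B: "0 \<le> B" and T: "0 \<le> T" and small: "2 * T * \<alpha> * (B + L) < 1"
  shows "norm (rk_model f s a b xa ua T - exact_model f xb ub T)
    \<le> norm (xa - xb) + T * norm (f xa ua - f xb ub)
      + 2 * (\<alpha> * (\<Sum>i<s. \<bar>b i\<bar>) + 1) * L * T\<^sup>2 * max (norm (f xa ua)) (norm (f xb ub))"
proof -
  define \<beta> where "\<beta> = (\<Sum>i<s. \<bar>b i\<bar>)"
  have L: "0 \<le> L"
    using lip_a by (rule lipschitz_on_nonneg)
  have "T * 1 \<le> T * \<alpha>"
    using \<alpha> T by (rule mult_left_mono)
  then have "T * B \<le> T * \<alpha> * B" "T * L \<le> T * \<alpha> * L"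
    using B L by (simp_all add: mult_right_mono)
  moreover have "0 \<le> T * \<alpha> * B" "0 \<le> T * \<alpha> * L"
    using T \<alpha> B L by simp_all
  moreover have "2 * T * \<alpha> * (B + L) = 2 * (T * \<alpha> * B) + 2 * (T * \<alpha> * L)"
    by (simp add: algebra_simps)
  ultimately have TB: "T * \<alpha> * B \<le> 1" "T * B < 1" and TL: "2 * T * \<alpha> * L \<le> 1" "2 * T * L \<le> 1"
    using small by linarith+
  have rk: "norm (rk_model f s a b xa ua T - xa - T *\<^sub>R f xa ua) \<le> 2 * \<alpha> * \<beta> * L * T\<^sup>2 * norm (f xa ua)"
    unfolding \<beta>_def using cons row lip_a bound_a B T TB(1) TL(1) by (rule rk_model_remainder)
  have ex: "norm (exact_model f xb ub T - xb - T *\<^sub>R f xb ub) \<le> 2 * L * T\<^sup>2 * norm (f xb ub)"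
    using lip_b bound_b B T TB(2) TL(2) by (rule exact_model_remainder)
  have "rk_model f s a b xa ua T - exact_model f xb ub T
      = (xa - xb) + T *\<^sub>R (f xa ua - f xb ub)
        + (rk_model f s a b xa ua T - xa - T *\<^sub>R f xa ua) - (exact_model f xb ub T - xb - T *\<^sub>R f xb ub)"
    by (simp add: algebra_simps)
  then have "norm (rk_model f s a b xa ua T - exact_model f xb ub T)
      \<le> norm (xa - xb) + T * norm (f xa ua - f xb ub)
        + 2 * \<alpha> * \<beta> * L * T\<^sup>2 * norm (f xa ua) + 2 * L * T\<^sup>2 * norm (f xb ub)"
    using rk ex T by (smt (verit) norm_scaleR norm_triangle_ineq norm_triangle_ineq4 abs_of_nonneg)
  also have "\<dots> \<le> norm (xa - xb) + T * norm (f xa ua - f xb ub)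
      + 2 * (\<alpha> * \<beta> + 1) * L * T\<^sup>2 * max (norm (f xa ua)) (norm (f xb ub))"
  proof -
    let ?m = "max (norm (f xa ua)) (norm (f xb ub))"
    have "2 * \<alpha> * \<beta> * L * T\<^sup>2 * norm (f xa ua) \<le> 2 * \<alpha> * \<beta> * L * T\<^sup>2 * ?m"
      using \<alpha> L by (intro mult_left_mono) (auto simp: \<beta>_def sum_nonneg)
    moreover have "2 * L * T\<^sup>2 * norm (f xb ub) \<le> 2 * L * T\<^sup>2 * ?m"
      using L by (intro mult_left_mono) auto
    moreover have "2 * (\<alpha> * \<beta> + 1) * L * T\<^sup>2 * ?m = 2 * \<alpha> * \<beta> * L * T\<^sup>2 * ?m + 2 * L * T\<^sup>2 * ?m"
      by (simp add: algebra_simps)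
    ultimately show ?thesis
      by linarith
  qed
  finally show ?thesis
    by (simp add: \<beta>_def)
qed

lemma rk_exact_closed_loop_estimate:
  fixes f :: "'a::euclidean_space \<Rightarrow> 'b \<Rightarrow> 'a" and U :: "'a \<Rightarrow> 'b"
  assumes cons: "rk_consistent s b"
    and row: "\<And>i. i < s \<Longrightarrow> (\<Sum>j<i. \<bar>a i j\<bar>) \<le> \<alpha>" and \<alpha>: "1 \<le> \<alpha>"
    and lip: "\<And>u. u \<in> S \<Longrightarrow> L-lipschitz_on (cball 0 (M + 1)) (\<lambda>x. f x u)"
    and bound: "\<And>x u. x \<in> cball 0 (M + 1) \<Longrightarrow> u \<in> S \<Longrightarrow> norm (f x u) \<le> B" and B: "0 \<le> B"
    and control: "\<And>x. norm x \<le> M \<Longrightarrow> U x \<in> S"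
    and closed_lip: "\<And>x y. norm x \<le> M \<Longrightarrow> norm y \<le> M \<Longrightarrow>
      norm (f x (U x) - f y (U y)) \<le> K * norm (x - y)"
    and K: "0 \<le> K" and origin: "norm (f 0 (U 0)) \<le> P"
    and xa: "norm xa \<le> M" and xb: "norm xb \<le> M"
    and T: "0 \<le> T" and small: "2 * T * \<alpha> * (B + L) < 1"
  shows "norm (rk_model f s a b xa (U xa) T - exact_model f xb (U xb) T)
    \<le> (1 + K * T) * norm (xa - xb)
      + T * (2 * (\<alpha> * (\<Sum>i<s. \<bar>b i\<bar>) + 1) * L * (K + 1) * T) * (max (norm xa) (norm xb) + P)"
proof -
  have L: "0 \<le> L"
    using lip[OF control[OF xa]] by (rule lipschitz_on_nonneg)
  have P: "0 \<le> P"
    using origin by (meson norm_ge_zero order_trans)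
  define Q where "Q = max (norm xa) (norm xb) + P"
  define c where "c = 2 * (\<alpha> * (\<Sum>i<s. \<bar>b i\<bar>) + 1) * L * T\<^sup>2"
  have "0 \<le> c"
    unfolding c_def using \<alpha> L by (intro mult_nonneg_nonneg add_nonneg_nonneg) (auto simp: sum_nonneg)
  have near: "cball x 1 \<subseteq> cball 0 (M + 1)" if "norm x \<le> M" for x
  proof
    fix y assume "y \<in> cball x 1"
    then show "y \<in> cball 0 (M + 1)"
      using that norm_triangle_sub[of y x] by (simp add: dist_norm norm_minus_commute)
  qed
  have lip_near: "L-lipschitz_on (cball x 1) (\<lambda>y. f y (U x))" if "norm x \<le> M" for x
    using lip[OF control[OF that]] near[OF that] by (rule lipschitz_on_subset)
  have bound_near: "norm (f y (U x)) \<le> B" if "norm x \<le> M" "y \<in> cball x 1" for x y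
    using bound[OF subsetD[OF near[OF that(1)] that(2)] control[OF that(1)]] .
  have field: "norm (f x (U x)) \<le> (K + 1) * Q" if "norm x \<le> max (norm xa) (norm xb)" "norm x \<le> M" for x
  proof -
    have "norm (f x (U x) - f 0 (U 0)) \<le> K * norm x"
      using closed_lip[of x 0] that(2) norm_ge_zero[of x] by simp
    then have "norm (f x (U x)) \<le> K * norm x + P"
      using origin norm_triangle_sub[of "f x (U x)" "f 0 (U 0)"] by linarith
    also have "\<dots> \<le> (K + 1) * Q"
    proof -
      have "K * norm x \<le> K * max (norm xa) (norm xb)"
        using that(1) K by (rule mult_left_mono)
      moreover have "0 \<le> K * P"
        using K P by simp
      moreover have "0 \<le> max (norm xa) (norm xb)"
        by (simp add: le_max_iff_disj)
      ultimately show ?thesis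
        unfolding Q_def distrib_left distrib_right by linarith
    qed
    finally show ?thesis .
  qed
  have "norm (rk_model f s a b xa (U xa) T - exact_model f xb (U xb) T)
      \<le> norm (xa - xb) + T * norm (f xa (U xa) - f xb (U xb)) + c * max (norm (f xa (U xa))) (norm (f xb (U xb)))"
    unfolding c_def using cons row \<alpha> lip_near[OF xa] bound_near[OF xa] lip_near[OF xb] bound_near[OF xb] B T small
    by (rule rk_exact_one_step_estimate)
  also have "\<dots> \<le> norm (xa - xb) + T * (K * norm (xa - xb)) + c * ((K + 1) * Q)"
    using closed_lip[OF xa xb] field[OF _ xa] field[OF _ xb] T \<open>0 \<le> c\<close>
    by (intro add_mono mult_left_mono) auto
  finally show ?thesis
    by (simp add: Q_def c_def power2_eq_square algebra_simps)
qed

lemma Kinf_linear: "0 < C \<Longrightarrow> Kinf (\<lambda>T. C * T)"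
  unfolding Kinf_def
  by (auto simp: strict_mono_on_def intro!: continuous_intros filterlim_tendsto_pos_mult_at_top
      filterlim_ident)

definition REPC_bound :: "('a::real_normed_vector \<Rightarrow> 'c::real_normed_vector \<Rightarrow> real \<Rightarrow> 'a)
    \<Rightarrow> ('a \<Rightarrow> 'c \<Rightarrow> real \<Rightarrow> 'a) \<Rightarrow> (real \<Rightarrow> real) \<Rightarrow> real \<Rightarrow> real \<Rightarrow> bool"
  where "REPC_bound Fa Fb \<phi> M E \<longleftrightarrow> (\<exists>K>0. \<exists>Ts>0. \<exists>\<rho>. Kinf \<rho> \<and>
    (\<forall>xa xb e T. norm xa \<le> M \<longrightarrow> norm xb \<le> M \<longrightarrow> norm e \<le> E \<longrightarrow> 0 < T \<longrightarrow> T < Ts \<longrightarrow>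
       norm (Fa xa e T - Fb xb e T)
         \<le> (1 + K * T) * norm (xa - xb) + T * \<rho> T * (max (norm xa) (norm xb) + \<phi> (norm e))))"

lemma REPC_iff_REPC_bound: "REPC Fa Fb \<longleftrightarrow> (\<exists>\<phi>. Kinf \<phi> \<and> (\<forall>M\<ge>0. \<forall>E\<ge>0. REPC_bound Fa Fb \<phi> M E))"
  by (simp add: REPC_def REPC_bound_def)

lemma rk_exact_REPC_bound:
  fixes f :: "'a::euclidean_space \<Rightarrow> 'b \<Rightarrow> 'a" and U :: "'a \<Rightarrow> 'c::real_normed_vector \<Rightarrow> real \<Rightarrow> 'b"
  assumes cons: "rk_consistent s b"
    and lip: "\<And>u. u \<in> S \<Longrightarrow> L-lipschitz_on (cball 0 (M + 1)) (\<lambda>x. f x u)" and L: "0 < L"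
    and bound: "\<And>x u. x \<in> cball 0 (M + 1) \<Longrightarrow> u \<in> S \<Longrightarrow> norm (f x u) \<le> B" and B: "0 \<le> B"
    and T0: "0 < T0"
    and control: "\<And>x e T. norm x \<le> M \<Longrightarrow> norm e \<le> E \<Longrightarrow> 0 < T \<Longrightarrow> T < T0 \<Longrightarrow> U x e T \<in> S"
    and closed_lip: "\<And>xa xb e T. norm xa \<le> M \<Longrightarrow> norm xb \<le> M \<Longrightarrow> norm e \<le> E \<Longrightarrow> 0 < T \<Longrightarrow> T < T0 \<Longrightarrow>
      norm (f xa (U xa e T) - f xb (U xb e T)) \<le> K * norm (xa - xb)"
    and K: "0 < K"
    and origin: "\<And>e T. norm e \<le> E \<Longrightarrow> 0 < T \<Longrightarrow> T < T0 \<Longrightarrow> norm (f 0 (U 0 e T)) \<le> \<phi> (norm e)"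
  shows "REPC_bound (\<lambda>x e T. rk_model f s a b x (U x e T) T) (\<lambda>x e T. exact_model f x (U x e T) T) \<phi> M E"
proof -
  define \<alpha> where "\<alpha> = 1 + (\<Sum>i<s. \<Sum>j<i. \<bar>a i j\<bar>)"
  have \<alpha>: "1 \<le> \<alpha>"
    by (simp add: \<alpha>_def sum_nonneg)
  have row: "(\<Sum>j<i. \<bar>a i j\<bar>) \<le> \<alpha>" if "i < s" for i
    using member_le_sum[of i "{..<s}" "\<lambda>i. \<Sum>j<i. \<bar>a i j\<bar>"] that by (simp add: \<alpha>_def sum_nonneg)
  define C where "C = 2 * (\<alpha> * (\<Sum>i<s. \<bar>b i\<bar>) + 1) * L * (K + 1)"
  have "0 < C"
    using \<alpha> L K by (auto simp: C_def intro!: mult_pos_pos add_nonneg_pos sum_nonneg)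
  have denom: "0 < 2 * \<alpha> * (B + L)"
    using \<alpha> B L by simp
  define Ts where "Ts = min T0 (1 / (2 * \<alpha> * (B + L)))"
  have "0 < Ts"
    using T0 denom by (simp add: Ts_def)
  moreover have "norm (rk_model f s a b xa (U xa e T) T - exact_model f xb (U xb e T) T)
      \<le> (1 + K * T) * norm (xa - xb) + T * (C * T) * (max (norm xa) (norm xb) + \<phi> (norm e))"
    if xa: "norm xa \<le> M" and xb: "norm xb \<le> M" and e: "norm e \<le> E" and T: "0 < T" "T < Ts"
    for xa xb e T
  proof -
    have "T < T0" and "T < 1 / (2 * \<alpha> * (B + L))"
      using T(2) by (simp_all add: Ts_def)
    then have small: "2 * T * \<alpha> * (B + L) < 1"
      using denom by (simp add: less_divide_eq ac_simps)
    show ?thesis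
      unfolding C_def
      using cons row \<alpha> lip bound B control[OF _ e T(1) \<open>T < T0\<close>] closed_lip[OF _ _ e T(1) \<open>T < T0\<close>]
        less_imp_le[OF K] origin[OF e T(1) \<open>T < T0\<close>] xa xb less_imp_le[OF T(1)] small
      by (rule rk_exact_closed_loop_estimate)
  qed
  ultimately show ?thesis
    unfolding REPC_bound_def using K Kinf_linear[OF \<open>0 < C\<close>] by blast
qed

theorem theorem3:
  fixes f :: "'a::euclidean_space \<Rightarrow> 'b::euclidean_space \<Rightarrow> 'a"
    and U :: "'a \<Rightarrow> 'c::euclidean_space \<Rightarrow> real \<Rightarrow> 'b"
    and s :: nat and a :: "nat \<Rightarrow> nat \<Rightarrow> real" and b :: "nat \<Rightarrow> real"
  assumes A1: "\<forall>X UU. compact X \<longrightarrow> compact UU \<longrightarrow>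
                 (\<exists>L>0. \<forall>x\<in>X. \<forall>y\<in>X. \<forall>u\<in>UU. norm (f x u - f y u) \<le> L * norm (x - y))"
    and A2: "\<exists>Cf :: real \<Rightarrow> real \<Rightarrow> real.
               (\<forall>M Cu. 0 \<le> M \<longrightarrow> 0 \<le> Cu \<longrightarrow> Cf M Cu > 0) \<and>
               (\<forall>M M' Cu Cu'. 0 \<le> M \<longrightarrow> M \<le> M' \<longrightarrow> 0 \<le> Cu \<longrightarrow> Cu \<le> Cu' \<longrightarrow> Cf M Cu \<le> Cf M' Cu') \<and>
               (\<forall>M Cu x u. 0 \<le> M \<longrightarrow> 0 \<le> Cu \<longrightarrow> norm x \<le> M \<longrightarrow> norm u \<le> Cu \<longrightarrow>
                   norm (f x u) \<le> Cf M Cu)"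
    and A3: "\<exists>Tu Cu :: real \<Rightarrow> real \<Rightarrow> real.
               (\<forall>M E. 0 \<le> M \<longrightarrow> 0 \<le> E \<longrightarrow> Tu M E > 0 \<and> Cu M E > 0) \<and>
               (\<forall>M M' E E'. 0 \<le> M \<longrightarrow> M \<le> M' \<longrightarrow> 0 \<le> E \<longrightarrow> E \<le> E' \<longrightarrow>
                   Tu M' E' \<le> Tu M E \<and> Cu M E \<le> Cu M' E') \<and>
               (\<forall>M E x e T. 0 \<le> M \<longrightarrow> 0 \<le> E \<longrightarrow> norm x \<le> M \<longrightarrow> norm e \<le> E \<longrightarrow>
                   0 < T \<longrightarrow> T < Tu M E \<longrightarrow> norm (U x e T) \<le> Cu M E)"
    and i: "\<exists>\<phi>. Kinf \<phi> \<and> (\<forall>E\<ge>0. \<exists>Ti>0. \<forall>e T. norm e \<le> E \<longrightarrow> 0 < T \<longrightarrow> T < Ti \<longrightarrow>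
               norm (f 0 (U 0 e T)) \<le> \<phi> (norm e))"
    and ii: "\<exists>K Tii :: real \<Rightarrow> real \<Rightarrow> real.
               (\<forall>M E. 0 \<le> M \<longrightarrow> 0 \<le> E \<longrightarrow> K M E > 0 \<and> Tii M E > 0) \<and>
               (\<forall>M M' E E'. 0 \<le> M \<longrightarrow> M \<le> M' \<longrightarrow> 0 \<le> E \<longrightarrow> E \<le> E' \<longrightarrow>
                   K M E \<le> K M' E' \<and> Tii M' E' \<le> Tii M E) \<and>
               (\<forall>M E xa xb e T. 0 \<le> M \<longrightarrow> 0 \<le> E \<longrightarrow> norm xa \<le> M \<longrightarrow> norm xb \<le> M \<longrightarrow>
                   norm e \<le> E \<longrightarrow> 0 < T \<longrightarrow> T < Tii M E \<longrightarrow>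
                   norm (f xa (U xa e T) - f xb (U xb e T)) \<le> K M E * norm (xa - xb))"
    and cons: "rk_consistent s b"
  shows "REPC (\<lambda>x e T. rk_model f s a b x (U x e T) T)
              (\<lambda>x e T. exact_model f x (U x e T) T)"
proof -
  obtain Cf :: "real \<Rightarrow> real \<Rightarrow> real"
    where Cf_pos: "\<And>M Cu. 0 \<le> M \<Longrightarrow> 0 \<le> Cu \<Longrightarrow> 0 < Cf M Cu"
      and Cf: "\<And>M Cu x u. 0 \<le> M \<Longrightarrow> 0 \<le> Cu \<Longrightarrow> norm x \<le> M \<Longrightarrow> norm u \<le> Cu \<Longrightarrow> norm (f x u) \<le> Cf M Cu"
    using A2 by blast
  obtain Tu Cu :: "real \<Rightarrow> real \<Rightarrow> real"
    where Tu_Cu_pos: "\<And>M E. 0 \<le> M \<Longrightarrow> 0 \<le> E \<Longrightarrow> 0 < Tu M E \<and> 0 < Cu M E"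
      and Cu: "\<And>M E x e T. 0 \<le> M \<Longrightarrow> 0 \<le> E \<Longrightarrow> norm x \<le> M \<Longrightarrow> norm e \<le> E \<Longrightarrow>
        0 < T \<Longrightarrow> T < Tu M E \<Longrightarrow> norm (U x e T) \<le> Cu M E"
    using A3 by blast
  obtain \<phi> where \<phi>: "Kinf \<phi>" and origin: "\<And>E. 0 \<le> E \<Longrightarrow> \<exists>Ti>0. \<forall>e T. norm e \<le> E \<longrightarrow> 0 < T \<longrightarrow> T < Ti \<longrightarrow>
      norm (f 0 (U 0 e T)) \<le> \<phi> (norm e)"
    using i by blast
  obtain K Tii :: "real \<Rightarrow> real \<Rightarrow> real"
    where K_Tii_pos: "\<And>M E. 0 \<le> M \<Longrightarrow> 0 \<le> E \<Longrightarrow> 0 < K M E \<and> 0 < Tii M E"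
      and K: "\<And>M E xa xb e T. 0 \<le> M \<Longrightarrow> 0 \<le> E \<Longrightarrow> norm xa \<le> M \<Longrightarrow> norm xb \<le> M \<Longrightarrow>
        norm e \<le> E \<Longrightarrow> 0 < T \<Longrightarrow> T < Tii M E \<Longrightarrow>
        norm (f xa (U xa e T) - f xb (U xb e T)) \<le> K M E * norm (xa - xb)"
    using ii by blast
  show ?thesis
    unfolding REPC_iff_REPC_bound
  proof (intro exI[of _ \<phi>] conjI \<phi> allI impI)
    fix M E :: real
    assume M: "0 \<le> M" and E: "0 \<le> E"
    obtain Ti where Ti: "0 < Ti" and origin_E: "\<And>e T. norm e \<le> E \<Longrightarrow> 0 < T \<Longrightarrow> T < Ti \<Longrightarrow>
        norm (f 0 (U 0 e T)) \<le> \<phi> (norm e)"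
      using origin[OF E] by blast
    obtain L where L: "0 < L" and lip: "\<And>x y u. x \<in> cball 0 (M + 1) \<Longrightarrow> y \<in> cball 0 (M + 1) \<Longrightarrow>
        u \<in> cball 0 (Cu M E) \<Longrightarrow> norm (f x u - f y u) \<le> L * norm (x - y)"
      using A1 compact_cball by meson
    have lip_on: "L-lipschitz_on (cball 0 (M + 1)) (\<lambda>x. f x u)" if "u \<in> cball 0 (Cu M E)" for u
      using lip that L by (intro lipschitz_onI) (auto simp: dist_norm)
    have bound: "norm (f x u) \<le> Cf (M + 1) (Cu M E)"
      if "x \<in> cball 0 (M + 1)" "u \<in> cball 0 (Cu M E)" for x u
      using that M Tu_Cu_pos[OF M E] by (intro Cf) auto
    define T0 where "T0 = min (Tu M E) (min Ti (Tii M E))"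
    have T0: "0 < T0"
      using Tu_Cu_pos[OF M E] K_Tii_pos[OF M E] Ti by (simp add: T0_def)
    have control: "U x e T \<in> cball 0 (Cu M E)"
      if "norm x \<le> M" "norm e \<le> E" "0 < T" "T < T0" for x e T
      using Cu[OF M E that(1-3)] that(4) by (simp add: T0_def)
    have closed_lip: "norm (f xa (U xa e T) - f xb (U xb e T)) \<le> K M E * norm (xa - xb)"
      if "norm xa \<le> M" "norm xb \<le> M" "norm e \<le> E" "0 < T" "T < T0" for xa xb e T
      using K[OF M E that(1-4)] that(5) by (simp add: T0_def)
    have origin_T0: "norm (f 0 (U 0 e T)) \<le> \<phi> (norm e)" if "norm e \<le> E" "0 < T" "T < T0" for e T
      using origin_E that by (simp add: T0_def)
    have B: "0 \<le> Cf (M + 1) (Cu M E)"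
      using Cf_pos M Tu_Cu_pos[OF M E] by (simp add: less_imp_le)
    show "REPC_bound (\<lambda>x e T. rk_model f s a b x (U x e T) T)
        (\<lambda>x e T. exact_model f x (U x e T) T) \<phi> M E"
      using cons lip_on L bound B T0 control closed_lip conjunct1[OF K_Tii_pos[OF M E]] origin_T0
      by (rule rk_exact_REPC_bound)
  qed
qed

end
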